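(* Let $d\ge2$, $j\in[d-1]$ and $\bar{\mathbf p}$ a $j$-critical direction. For every $\varepsilon>0$ there exists a constant $\zeta>0$ such that if $\tau\ge\frac{\varepsilon}{\log n}$, then with high probability for every $(j+1)$-subset $B$ of $[n]$, the complex $\mathcal G_\tau+B$ contains at least $\zeta n$ many $j$-shells that contain $B$, where $\mathcal G_\tau=\mathcal G(n,\tau\bar{\mathbf p})$.
   Context: Whp = with probability tending to $1$ as $n\to\infty$. $\mathcal G(n,\mathbf p)$: random complex on $[n]$ in which for each $k\in[d]$ each $(k+1)$-subset is independently an edge with probability $\min\{p_k,1\}$; the complex consists of all singletons and all nonempty subsets of edges. For a complex $\mathcal G$ and nonempty $B\subseteq[n]$, $\mathcal G+B=\mathcal G\cup\{A\mid\emptyset\ne A\subseteq B\}$. A $(j+2)$-set is a $j$-shell in $\mathcal G$ if all its $(j+1)$-subsets are members of $\mathcal G$. $j$-critical direction: $\bar{\mathbf p}$ is $j$-admissible if for each $1\le k\le d$ there are real constants $\bar\alpha_k,\bar\gamma_k$ and a function $\bar\beta_k(n)$ with $\bar p_k=\frac{\bar\alpha_k\log n+\bar\beta_k}{n^{k-j+\bar\gamma_k}}(k-j)!$ and (A1) at least one of $\bar\alpha_k,\bar\gamma_k$ zero, neither negative; (A2) if $\bar\alpha_k=0$ then $\bar\beta_k\equiv0$ or $\bar\beta_k>0$ with $\bar\beta_k=o(n^\varepsilon)$, $\bar\beta_k=\omega(n^{-\varepsilon})$ for every constant $\varepsilon>0$; (A3) if $\bar\gamma_k=0$ then $|\bar\beta_k|=o(\log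 n)$; (A4) some $k\in\{j+1,\dots,d\}$ has $\bar\alpha_k>0$. For $j\le k\le d$, $\bar p_k\ne0$: $\bar\lambda_k=j+1-\bar\gamma_k-(k-j+1)\sum_{i=j+1}^d\bar\alpha_i$; $\bar\mu_k=-(k-j+1)\sum_{i=j+1}^d\bar\beta_i/n^{\bar\gamma_i}$ plus $0$ if $\bar p_k>1$, $\log\log n$ if $\bar p_k\le1,\bar\alpha_k\ne0$, $\log\bar\beta_k$ if $\bar p_k\le1,\bar\alpha_k=0$; $\bar\nu_k=-\log((j+1)!)$ if $k=j$, $-\log(j!)-\log(k-j+1)+\log\bar\alpha_k$ if $k\ne j,\bar\alpha_k\ne0$, $-\log(j!)-\log(k-j+1)$ otherwise. $j$-critical: $j$-admissible with $\bar\lambda_k\log n+\bar\mu_k+\bar\nu_k\le0$ for all such $k$ and equality for some $k$. *)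

theory Defs
  imports "HOL-Probability.Probability" "HOL-Library.Landau_Symbols"
begin

text \<open>A direction is a family p k n (k = dimension index, n = number of vertices).
  Representation via constants alpha k, gamma k and functions beta k of n.\<close>

definition admissible_repr ::
  "nat \<Rightarrow> nat \<Rightarrow> (nat \<Rightarrow> nat \<Rightarrow> real) \<Rightarrow> (nat \<Rightarrow> real) \<Rightarrow> (nat \<Rightarrow> nat \<Rightarrow> real)
    \<Rightarrow> (nat \<Rightarrow> real) \<Rightarrow> bool" where
  "admissible_repr d j p \<alpha> \<beta> \<gamma> \<longleftrightarrow>
     (\<forall>k\<in>{1..d}.
        (\<forall>n. p k n = (\<alpha> k * ln (real n) + \<beta> k n) / (real n powr (real k - real j + \<gamma> k))
                      * fact (k - j))
      \<and> \<alpha> k \<ge> 0 \<and> \<gamma> k \<ge> 0 \<and> (\<alpha> k = 0 \<or> \<gamma> k = 0)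
      \<and> (\<alpha> k = 0 \<longrightarrow>
           ((\<forall>n. \<beta> k n = 0) \<or>
            ((\<forall>n. \<beta> k n > 0) \<and>
             (\<forall>\<epsilon>>0. \<beta> k \<in> o(\<lambda>n. real n powr \<epsilon>) \<and> \<beta> k \<in> \<omega>(\<lambda>n. real n powr (-\<epsilon>))))))
      \<and> (\<gamma> k = 0 \<longrightarrow> (\<lambda>n. \<bar>\<beta> k n\<bar>) \<in> o(\<lambda>n. ln (real n))))
   \<and> (\<exists>k\<in>{j+1..d}. \<alpha> k > 0)"

definition j_admissible :: "nat \<Rightarrow> nat \<Rightarrow> (nat \<Rightarrow> nat \<Rightarrow> real) \<Rightarrow> bool" where
  "j_admissible d j p \<longleftrightarrow> (\<exists>\<alpha> \<beta> \<gamma>. admissible_repr d j p \<alpha> \<beta> \<gamma>)"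

definition crit_lambda :: "nat \<Rightarrow> nat \<Rightarrow> (nat \<Rightarrow> real) \<Rightarrow> (nat \<Rightarrow> real) \<Rightarrow> nat \<Rightarrow> real" where
  "crit_lambda d j \<alpha> \<gamma> k = real j + 1 - \<gamma> k - (real k - real j + 1) * (\<Sum>i=j+1..d. \<alpha> i)"

definition crit_mu ::
  "nat \<Rightarrow> nat \<Rightarrow> (nat \<Rightarrow> nat \<Rightarrow> real) \<Rightarrow> (nat \<Rightarrow> real) \<Rightarrow> (nat \<Rightarrow> nat \<Rightarrow> real)
    \<Rightarrow> (nat \<Rightarrow> real) \<Rightarrow> nat \<Rightarrow> nat \<Rightarrow> real" where
  "crit_mu d j p \<alpha> \<beta> \<gamma> k n =
     - (real k - real j + 1) * (\<Sum>i=j+1..d. \<beta> i n / real n powr \<gamma> i)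
     + (if p k n > 1 then 0
        else if \<alpha> k \<noteq> 0 then ln (ln (real n))
        else ln (\<beta> k n))"

definition crit_nu :: "nat \<Rightarrow> (nat \<Rightarrow> real) \<Rightarrow> nat \<Rightarrow> real" where
  "crit_nu j \<alpha> k =
     (if k = j then - ln (fact (j + 1))
      else if \<alpha> k \<noteq> 0 then - ln (fact j) - ln (real k - real j + 1) + ln (\<alpha> k)
      else - ln (fact j) - ln (real k - real j + 1))"

definition j_critical :: "nat \<Rightarrow> nat \<Rightarrow> (nat \<Rightarrow> nat \<Rightarrow> real) \<Rightarrow> bool" where
  "j_critical d j p \<longleftrightarrow>
     (\<exists>\<alpha> \<beta> \<gamma>. admissible_repr d j p \<alpha> \<beta> \<gamma>
       \<and> (\<forall>k\<in>{j..d}. p k \<noteq> (\<lambda>_. 0) \<longrightarrow>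
            (\<forall>\<^sub>F n in sequentially.
               crit_lambda d j \<alpha> \<gamma> k * ln (real n) + crit_mu d j p \<alpha> \<beta> \<gamma> k n + crit_nu j \<alpha> k \<le> 0))
       \<and> (\<exists>k\<in>{j..d}. p k \<noteq> (\<lambda>_. 0) \<and>
            (\<forall>\<^sub>F n in sequentially.
               crit_lambda d j \<alpha> \<gamma> k * ln (real n) + crit_mu d j p \<alpha> \<beta> \<gamma> k n + crit_nu j \<alpha> k = 0)))"

text \<open>Random complex G(n,p) on [n] = {1..n}; q k is the probability parameter p_k (at this n).\<close>

definition edge_cands :: "nat \<Rightarrow> nat \<Rightarrow> nat set set" where
  "edge_cands n d = {A. A \<subseteq> {1..n} \<and> 2 \<le> card A \<and> card A \<le> d + 1}"

definition random_edges :: "nat \<Rightarrow> nat \<Rightarrow> (nat \<Rightarrow> real) \<Rightarrow> (nat set \<Rightarrow> bool) pmf" where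
  "random_edges n d q =
     Pi_pmf (edge_cands n d) False (\<lambda>A. bernoulli_pmf (min (q (card A - 1)) 1))"

definition complex_of :: "nat \<Rightarrow> (nat set \<Rightarrow> bool) \<Rightarrow> nat set set" where
  "complex_of n E = {{v} | v. v \<in> {1..n}} \<union> {A. A \<noteq> {} \<and> (\<exists>e. E e \<and> A \<subseteq> e)}"

definition random_complex :: "nat \<Rightarrow> nat \<Rightarrow> (nat \<Rightarrow> real) \<Rightarrow> nat set set pmf" where
  "random_complex n d q = map_pmf (complex_of n) (random_edges n d q)"

definition add_set :: "nat set set \<Rightarrow> nat set \<Rightarrow> nat set set" where
  "add_set G B = G \<union> {A. A \<noteq> {} \<and> A \<subseteq> B}"

definition is_shell :: "nat set set \<Rightarrow> nat \<Rightarrow> nat set \<Rightarrow> bool" where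
  "is_shell G j S \<longleftrightarrow> finite S \<and> card S = j + 2 \<and> (\<forall>T. T \<subseteq> S \<and> card T = j + 1 \<longrightarrow> T \<in> G)"

end

theory Submission
  imports Defs "HOL-Real_Asymp.Real_Asymp"
begin

(* Only the admissibility of the direction enters, through one k = j + m > j with alpha_k > 0:
   then gamma_k = 0, so edges of dimension j + m have probability at least of order
   tau log n / n^m >= eps / n^m. Fix a (j+1)-set B and split the other vertices into a left
   and a right half. Call a left vertex v good if for every b in B the j-face (B - b) + v lies
   in an edge (B - b) + v + W with W an m-subset of the right half; then B + v is a j-shell of
   G + B. The edges witnessing different b, and different v, are distinct, so the events
   "v is good" are independent, and since there are about n^m choices of W each has
   probability at least c = (1 - exp (- kappa))^(j+1) > 0. Hoeffding's inequality yields at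
   least c n / 8 good vertices except with probability exp (- c^2 n / 8), and a union bound
   over the at most n^(j+1) sets B finishes the proof. *)

lemma measure_pmf_prob_Collect_not:
  "measure_pmf.prob M {x. \<not> P x} = 1 - measure_pmf.prob M {x. P x}"
proof -
  have "{x. \<not> P x} = space (measure_pmf M) - {x. P x}"
    by auto
  then show ?thesis
    using measure_pmf.prob_compl[of "{x. P x}" M] by simp
qed

lemma prob_pair_pmf_Times:
  "measure_pmf.prob (pair_pmf M N) (A \<times> B) = measure_pmf.prob M A * measure_pmf.prob N B"
proof -
  have "measure_pmf.prob (pair_pmf M N) (A \<times> B) =
        measure_pmf.prob (pair_pmf M N) ((A \<inter> set_pmf M) \<times> (B \<inter> set_pmf N))"
    by (subst (1 2) measure_Int_set_pmf[symmetric]) (auto intro!: arg_cong[where f="measure_pmf.prob _"])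
  also have "\<dots> = measure_pmf.prob M (A \<inter> set_pmf M) * measure_pmf.prob N (B \<inter> set_pmf N)"
    by (rule measure_pmf_prob_product) auto
  finally show ?thesis
    by (simp add: measure_Int_set_pmf)
qed

lemma prob_Pi_pmf_subset_local:
  assumes "finite A" "A' \<subseteq> A" "F \<subseteq> A'"
    and local: "\<And>f g. \<forall>x\<in>F. f x = g x \<Longrightarrow> P f = P g"
  shows "measure_pmf.prob (Pi_pmf A dflt p) {f. P f} = measure_pmf.prob (Pi_pmf A' dflt p) {f. P f}"
proof -
  have restrict: "P (\<lambda>x. if x \<in> A' then f x else dflt) = P f" for f
    by (rule local) (use assms(3) in auto)
  have "measure_pmf.prob (Pi_pmf A' dflt p) {f. P f} =
      measure_pmf.prob (map_pmf (\<lambda>f x. if x \<in> A' then f x else dflt) (Pi_pmf A dflt p)) {f. P f}"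
    using assms(1,2) by (subst Pi_pmf_subset[of A A']) auto
  also have "\<dots> = measure_pmf.prob (Pi_pmf A dflt p) {f. P f}"
    using restrict by simp
  finally show ?thesis ..
qed

lemma prob_Pi_pmf_disjoint_blocks:
  fixes F :: "'i \<Rightarrow> 'a set" and P :: "'i \<Rightarrow> ('a \<Rightarrow> 'b) \<Rightarrow> bool"
  assumes "finite I" "finite A" "\<And>i. i \<in> I \<Longrightarrow> F i \<subseteq> A" "disjoint_family_on F I"
    and "\<And>i f g. i \<in> I \<Longrightarrow> \<forall>x\<in>F i. f x = g x \<Longrightarrow> P i f = P i g"
  shows "measure_pmf.prob (Pi_pmf A dflt p) {f. \<forall>i\<in>I. P i f}
       = (\<Prod>i\<in>I. measure_pmf.prob (Pi_pmf A dflt p) {f. P i f})"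
  using assms
proof (induction I arbitrary: A rule: finite_induct)
  case empty
  then show ?case by simp
next
  case (insert i I)
  define A1 where "A1 = F i"
  define A2 where "A2 = A - F i"
  have fin: "finite A1" "finite A2"
    using insert.prems by (auto simp: A1_def A2_def intro: finite_subset)
  have A: "A = A1 \<union> A2" "A1 \<inter> A2 = {}"
    using insert.prems(2) by (auto simp: A1_def A2_def)
  have F_A2: "F k \<subseteq> A2" if "k \<in> I" for k
    using insert.prems(2,3) insert.hyps that unfolding disjoint_family_on_def A2_def by auto
  let ?glue = "\<lambda>(f, g) x. if x \<in> A1 then f x else g x"
  have "?glue -` {f. \<forall>k\<in>insert i I. P k f} = {f. P i f} \<times> {g. \<forall>k\<in>I. P k g}"
  proof -
    have "P i (?glue (f, g)) = P i f" for f g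
      by (rule insert.prems(4)) (auto simp: A1_def)
    moreover have "P k (?glue (f, g)) = P k g" if "k \<in> I" for k f g
      using F_A2[OF that] A that by (intro insert.prems(4)) auto
    ultimately show ?thesis by auto
  qed
  then have "measure_pmf.prob (Pi_pmf A dflt p) {f. \<forall>k\<in>insert i I. P k f}
      = measure_pmf.prob (Pi_pmf A1 dflt p) {f. P i f} *
        measure_pmf.prob (Pi_pmf A2 dflt p) {g. \<forall>k\<in>I. P k g}"
    using A fin by (simp add: Pi_pmf_union prob_pair_pmf_Times)
  also have "measure_pmf.prob (Pi_pmf A2 dflt p) {g. \<forall>k\<in>I. P k g}
      = (\<Prod>k\<in>I. measure_pmf.prob (Pi_pmf A2 dflt p) {f. P k f})"
    using insert.prems fin F_A2 by (intro insert.IH) (auto simp: disjoint_family_on_def)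
  also have "\<dots> = (\<Prod>k\<in>I. measure_pmf.prob (Pi_pmf A dflt p) {f. P k f})"
  proof (intro prod.cong refl)
    fix k assume "k \<in> I"
    then show "measure_pmf.prob (Pi_pmf A2 dflt p) {f. P k f} = measure_pmf.prob (Pi_pmf A dflt p) {f. P k f}"
      by (intro prob_Pi_pmf_subset_local[symmetric, of A A2 "F k"])
        (use insert.prems A F_A2 in \<open>auto intro: insert.prems(4)\<close>)
  qed
  also have "measure_pmf.prob (Pi_pmf A1 dflt p) {f. P i f} =
      measure_pmf.prob (Pi_pmf A dflt p) {f. P i f}"
    by (intro prob_Pi_pmf_subset_local[symmetric, of A A1 "F i"])
      (use insert.prems A in \<open>auto intro: insert.prems(4) simp: A1_def\<close>)
  finally show ?case
    using insert.hyps by simp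
qed

lemma map_Pi_pmf_disjoint_blocks:
  fixes F :: "'i \<Rightarrow> 'a set" and Y :: "'i \<Rightarrow> ('a \<Rightarrow> 'b) \<Rightarrow> bool"
  assumes "finite I" "finite A" "\<And>i. i \<in> I \<Longrightarrow> F i \<subseteq> A" "disjoint_family_on F I"
    and local: "\<And>i f g. i \<in> I \<Longrightarrow> \<forall>x\<in>F i. f x = g x \<Longrightarrow> Y i f = Y i g"
  shows "map_pmf (\<lambda>f i. i \<in> I \<and> Y i f) (Pi_pmf A dflt p)
       = Pi_pmf I False (\<lambda>i. bernoulli_pmf (measure_pmf.prob (Pi_pmf A dflt p) {f. Y i f}))"
proof (rule pmf_eqI)
  fix h :: "'i \<Rightarrow> bool"
  let ?M = "Pi_pmf A dflt p"
  let ?r = "\<lambda>i. measure_pmf.prob ?M {f. Y i f}"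
  show "pmf (map_pmf (\<lambda>f i. i \<in> I \<and> Y i f) ?M) h = pmf (Pi_pmf I False (\<lambda>i. bernoulli_pmf (?r i))) h"
  proof (cases "\<forall>x. x \<notin> I \<longrightarrow> \<not> h x")
    case False
    then have "(\<lambda>f i. i \<in> I \<and> Y i f) -` {h} = {}"
      by auto
    moreover have "pmf (Pi_pmf I False (\<lambda>i. bernoulli_pmf (?r i))) h = 0"
      using False assms(1) by (subst pmf_Pi) auto
    ultimately show ?thesis
      by (simp add: pmf_map)
  next
    case True
    have "(\<lambda>f i. i \<in> I \<and> Y i f) -` {h} = {f. \<forall>i\<in>I. Y i f = h i}"
      using True by (auto simp: fun_eq_iff)
    then have "pmf (map_pmf (\<lambda>f i. i \<in> I \<and> Y i f) ?M) h = measure_pmf.prob ?M {f. \<forall>i\<in>I. Y i f = h i}"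
      by (simp add: pmf_map)
    also have "\<dots> = (\<Prod>i\<in>I. measure_pmf.prob ?M {f. Y i f = h i})"
      by (rule prob_Pi_pmf_disjoint_blocks[where F=F]) (use assms in \<open>auto dest: local\<close>)
    also have "\<dots> = (\<Prod>i\<in>I. pmf (bernoulli_pmf (?r i)) (h i))"
    proof (intro prod.cong refl)
      fix i
      show "measure_pmf.prob ?M {f. Y i f = h i} = pmf (bernoulli_pmf (?r i)) (h i)"
        by (cases "h i") (simp_all add: measure_pmf_prob_Collect_not)
    qed
    also have "\<dots> = pmf (Pi_pmf I False (\<lambda>i. bernoulli_pmf (?r i))) h"
      using True assms(1) by (subst pmf_Pi) auto
    finally show ?thesis .
  qed
qed

lemma prob_Pi_pmf_bernoulli_ex:
  assumes "finite A" "S \<subseteq> A" "\<And>x. x \<in> S \<Longrightarrow> r x \<in> {0..1}"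
  shows "measure_pmf.prob (Pi_pmf A False (\<lambda>x. bernoulli_pmf (r x))) {f. \<exists>x\<in>S. f x}
       = 1 - (\<Prod>x\<in>S. 1 - r x)"
proof -
  let ?M = "Pi_pmf A False (\<lambda>x. bernoulli_pmf (r x))"
  have "{f. \<exists>x\<in>S. f x} = UNIV - Pi A (\<lambda>x. if x \<in> S then {False} else UNIV)"
    using assms(2) by (auto simp: Pi_iff split: if_splits)
  moreover have "measure_pmf.prob ?M (Pi A (\<lambda>x. if x \<in> S then {False} else UNIV))
      = (\<Prod>x\<in>S. 1 - r x)"
    using assms by (simp add: measure_Pi_pmf_Pi measure_pmf_single if_distrib prod.If_cases Int_absorb1)
  ultimately show ?thesis
    using measure_pmf.prob_compl[of "Pi A _" ?M] by (simp add: Compl_eq_Diff_UNIV)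
qed

lemma Pi_pmf_bernoulli_count_lower_tail:
  assumes "finite X" "X \<noteq> {}" "\<And>v. v \<in> X \<Longrightarrow> r v \<in> {0..1}" "\<delta> \<ge> 0"
  shows "measure_pmf.prob (Pi_pmf X False (\<lambda>v. bernoulli_pmf (r v)))
           {f. real (card {v\<in>X. f v}) \<le> (\<Sum>v\<in>X. r v) - \<delta>} \<le> exp (-2 * \<delta>\<^sup>2 / real (card X))"
proof -
  define M where "M = Pi_pmf X False (\<lambda>v. bernoulli_pmf (r v))"
  have expectation: "measure_pmf.expectation M (\<lambda>f. of_bool (f v)) = r v" if "v \<in> X" for v
  proof -
    have "map_pmf (\<lambda>f. f v) M = bernoulli_pmf (r v)"
      unfolding M_def using assms(1) that by (subst Pi_pmf_component) auto
    then show ?thesis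
      using assms(3)[OF that] integral_map_pmf[of "\<lambda>f. f v" M "\<lambda>b. of_bool b :: real"] by simp
  qed
  interpret Hoeffding_ineq "measure_pmf M" X "\<lambda>v f. of_bool (f v)" "\<lambda>_. 0" "\<lambda>_. 1" "\<Sum>v\<in>X. r v"
  proof unfold_locales
    show "prob_space.indep_vars (measure_pmf M) (\<lambda>_. borel) (\<lambda>v f. of_bool (f v) :: real) X"
      unfolding M_def
      by (intro prob_space.indep_vars_compose2[OF _ indep_vars_Pi_pmf])
         (auto simp: measure_pmf.prob_space_axioms assms(1))
    show "(\<Sum>v\<in>X. r v) \<equiv> (\<Sum>v\<in>X. measure_pmf.expectation M (\<lambda>f. of_bool (f v)))"
      using expectation by simp
  qed (auto simp: assms(1))
  have "(\<Sum>v\<in>X. of_bool (f v) :: real) = real (card {v\<in>X. f v})" for f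
    using assms(1) by (simp add: of_bool_def sum.If_cases Int_def)
  moreover have "measure_pmf.prob M {f\<in>space (measure_pmf M). (\<Sum>v\<in>X. of_bool (f v)) \<le> (\<Sum>v\<in>X. r v) - \<delta>}
      \<le> exp (-2 * \<delta>\<^sup>2 / (\<Sum>v\<in>X. (1 - 0)\<^sup>2))"
    by (rule Hoeffding_ineq_le[OF assms(4)]) (use assms(1,2) in \<open>auto simp: card_gt_0_iff\<close>)
  ultimately show ?thesis
    unfolding M_def by simp
qed

lemma prob_compl_UNION_ge:
  assumes "finite I"
  shows "1 - (\<Sum>i\<in>I. measure_pmf.prob M (A i)) \<le> measure_pmf.prob M (- (\<Union>i\<in>I. A i))"
proof -
  have "measure_pmf.prob M (\<Union>i\<in>I. A i) \<le> (\<Sum>i\<in>I. measure_pmf.prob M (A i))"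
    using assms by (rule measure_pmf.finite_measure_subadditive_finite) auto
  then show ?thesis
    using measure_pmf.prob_compl[of "\<Union>i\<in>I. A i" M] by (simp add: Compl_eq_Diff_UNIV)
qed

lemma one_minus_power_le_exp:
  fixes x :: real
  assumes "0 \<le> x" "x \<le> 1" "\<kappa> \<le> x * N"
  shows "(1 - x) ^ N \<le> exp (- \<kappa>)"
proof -
  have "(1 - x) ^ N \<le> exp (- x) ^ N"
    using assms(1,2) exp_ge_add_one_self[of "- x"] by (intro power_mono) auto
  also have "\<dots> = exp (- (x * N))"
    by (simp add: exp_of_nat_mult[symmetric] mult.commute)
  also have "\<dots> \<le> exp (- \<kappa>)"
    using assms(3) by simp
  finally show ?thesis .
qed

lemma finite_edge_cands [simp]: "finite (edge_cands n d)"
  by (rule finite_subset[of _ "Pow {1..n}"]) (auto simp: edge_cands_def)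

definition shell_rich :: "nat \<Rightarrow> nat \<Rightarrow> real \<Rightarrow> nat set set set" where
  "shell_rich n j \<zeta> = {G. \<forall>B. B \<subseteq> {1..n} \<and> card B = j + 1 \<longrightarrow>
     \<zeta> * real n \<le> real (card {S. is_shell (add_set G B) j S \<and> B \<subseteq> S})}"

definition apex_cands :: "nat \<Rightarrow> nat set \<Rightarrow> nat set" where
  "apex_cands n B = {1..n div 2} - B"

definition fill_pool :: "nat \<Rightarrow> nat set \<Rightarrow> nat set" where
  "fill_pool n B = {n div 2 + 1..n} - B"

definition fillings :: "nat \<Rightarrow> nat set \<Rightarrow> nat \<Rightarrow> nat set set" where
  "fillings n B m = {W. W \<subseteq> fill_pool n B \<and> card W = m}"

definition cover_edge :: "nat set \<Rightarrow> nat \<Rightarrow> nat \<Rightarrow> nat set \<Rightarrow> nat set" where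
  "cover_edge B b v W = (B - {b}) \<union> insert v W"

definition good_apex :: "nat \<Rightarrow> nat set \<Rightarrow> nat \<Rightarrow> (nat set \<Rightarrow> bool) \<Rightarrow> nat \<Rightarrow> bool" where
  "good_apex n B m E v \<longleftrightarrow> (\<forall>b\<in>B. \<exists>W\<in>fillings n B m. E (cover_edge B b v W))"

lemma finite_apex_cands [simp]: "finite (apex_cands n B)"
  and finite_fill_pool [simp]: "finite (fill_pool n B)"
  by (simp_all add: apex_cands_def fill_pool_def)

lemma finite_fillings [simp]: "finite (fillings n B m)"
  by (rule finite_subset[of _ "Pow (fill_pool n B)"]) (auto simp: fillings_def)

lemma card_fillings: "card (fillings n B m) = card (fill_pool n B) choose m"
  unfolding fillings_def by (simp add: n_subsets)

lemma
  assumes "v \<in> apex_cands n B" "W \<subseteq> fill_pool n B"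
  shows cover_edge_Int_base: "cover_edge B b v W \<inter> B = B - {b}"
    and cover_edge_Int_apex_cands: "cover_edge B b v W \<inter> apex_cands n B = {v}"
    and cover_edge_Int_fill_pool: "cover_edge B b v W \<inter> fill_pool n B = W"
  using assms by (auto simp: cover_edge_def apex_cands_def fill_pool_def)

lemma cover_edge_eqD:
  assumes "cover_edge B b v W = cover_edge B b' v' W'" "b \<in> B" "b' \<in> B"
    "v \<in> apex_cands n B" "v' \<in> apex_cands n B" "W \<subseteq> fill_pool n B" "W' \<subseteq> fill_pool n B"
  shows "b = b' \<and> v = v' \<and> W = W'"
proof -
  have "B - {b} = B - {b'}"
    using assms by (metis cover_edge_Int_base)
  moreover have "{v} = {v'}"
    using assms by (metis cover_edge_Int_apex_cands)
  moreover have "W = W'"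
    using assms by (metis cover_edge_Int_fill_pool)
  ultimately show ?thesis
    using assms(2,3) by blast
qed

lemma card_cover_edge:
  assumes "finite B" "b \<in> B" "v \<in> apex_cands n B" "W \<in> fillings n B m"
  shows "card (cover_edge B b v W) = card B + m"
proof -
  have "finite W" "card W = m" "v \<notin> W" "v \<notin> B" "(B - {b}) \<inter> insert v W = {}"
    using assms(3,4) by (auto simp: fillings_def apex_cands_def fill_pool_def intro: finite_subset)
  moreover have "card B > 0"
    using assms(1,2) card_gt_0_iff by blast
  ultimately show ?thesis
    using assms(1,2) by (simp add: cover_edge_def card_Un_disjoint card_Diff_subset)
qed

lemma cover_edge_in_edge_cands:
  assumes "B \<subseteq> {1..n}" "b \<in> B" "v \<in> apex_cands n B" "W \<in> fillings n B m"
    and "2 \<le> card B + m" "card B + m \<le> d + 1"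
  shows "cover_edge B b v W \<in> edge_cands n d"
  using assms card_cover_edge[OF finite_subset[OF assms(1)] assms(2-4)]
  by (auto simp: edge_cands_def cover_edge_def apex_cands_def fillings_def fill_pool_def)

lemma card_apex_cands_ge:
  assumes "finite B" "4 * card B + 2 \<le> n"
  shows "real n / 4 \<le> card (apex_cands n B)"
proof -
  have "card {1..n div 2} - card B \<le> card (apex_cands n B)"
    unfolding apex_cands_def by (rule diff_card_le_card_Diff) (use assms(1) in simp)
  then have "n \<le> 4 * card (apex_cands n B)"
    using assms(2) by simp
  then show ?thesis
    by linarith
qed

lemma card_fill_pool_ge:
  assumes "finite B" "4 * card B \<le> n"
  shows "real n / 4 \<le> card (fill_pool n B)"
proof -
  have "card {n div 2 + 1..n} - card B \<le> card (fill_pool n B)"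
    unfolding fill_pool_def by (rule diff_card_le_card_Diff) (use assms(1) in simp)
  then have "n \<le> 4 * card (fill_pool n B)"
    using assms(2) by simp
  then show ?thesis
    by linarith
qed

lemma card_fillings_ge:
  assumes "finite B" "4 * card B \<le> n" "1 \<le> m" "4 * m \<le> n"
  shows "(real n / (4 * real m)) ^ m \<le> card (fillings n B m)"
proof -
  have pool: "real n / 4 \<le> card (fill_pool n B)"
    using assms(1,2) by (rule card_fill_pool_ge)
  then have "m \<le> card (fill_pool n B)"
    using assms(4) by linarith
  have "(real n / (4 * real m)) ^ m \<le> (card (fill_pool n B) / real m) ^ m"
    using pool assms(3) by (intro power_mono divide_right_mono) (auto simp: field_simps)
  also have "\<dots> \<le> card (fill_pool n B) choose m"
    using \<open>m \<le> card (fill_pool n B)\<close> by (rule binomial_ge_n_over_k_pow_k)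
  finally show ?thesis
    by (simp add: card_fillings)
qed

lemma add_set_complex_of_subset:
  assumes "\<And>e. E e \<Longrightarrow> e \<subseteq> {1..n}" "B \<subseteq> {1..n}" "T \<in> add_set (complex_of n E) B"
  shows "T \<subseteq> {1..n}"
  using assms unfolding add_set_def complex_of_def by blast

lemma shell_subset:
  assumes "\<And>e. E e \<Longrightarrow> e \<subseteq> {1..n}" "B \<subseteq> {1..n}"
    and "is_shell (add_set (complex_of n E) B) j S"
  shows "S \<subseteq> {1..n}"
proof
  fix x assume "x \<in> S"
  have S: "finite S" "card S = j + 2"
    and faces: "\<And>T. T \<subseteq> S \<Longrightarrow> card T = j + 1 \<Longrightarrow> T \<in> add_set (complex_of n E) B"
    using assms(3) unfolding is_shell_def by blast+
  have "card (S - {x}) > 0"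
    using S \<open>x \<in> S\<close> by simp
  then obtain y where "y \<in> S" "y \<noteq> x"
    by (metis Diff_iff card_gt_0_iff ex_in_conv singletonI)
  then have "S - {y} \<in> add_set (complex_of n E) B"
    using S by (intro faces) auto
  then have "S - {y} \<subseteq> {1..n}"
    using add_set_complex_of_subset[OF assms(1,2)] by blast
  moreover have "x \<in> S - {y}"
    using \<open>x \<in> S\<close> \<open>y \<noteq> x\<close> by simp
  ultimately show "x \<in> {1..n}"
    by (rule subsetD)
qed

lemma is_shell_insert_good_apex:
  assumes "finite B" "card B = j + 1" "v \<in> apex_cands n B" "good_apex n B m E v"
  shows "is_shell (add_set (complex_of n E) B) j (insert v B)"
proof -
  have "v \<notin> B"
    using assms(3) by (simp add: apex_cands_def)
  have "T \<in> add_set (complex_of n E) B" if T: "T \<subseteq> insert v B" "card T = j + 1" for T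
  proof (cases "v \<in> T")
    case False
    then show ?thesis
      using T by (auto simp: add_set_def)
  next
    case True
    have "T - {v} \<subseteq> B" "card (T - {v}) = j"
      using T True assms(1) by (auto intro: finite_subset)
    then have "card (B - (T - {v})) = 1"
      using card_Diff_subset[OF finite_subset[OF _ assms(1)]] assms(2) by simp
    then obtain b where b: "B - (T - {v}) = {b}"
      by (auto simp: card_Suc_eq)
    then have "b \<in> B" "T = insert v (B - {b})"
      using \<open>T - {v} \<subseteq> B\<close> True by blast+
    then obtain W where "E (cover_edge B b v W)"
      using assms(4) by (auto simp: good_apex_def)
    moreover have "T \<subseteq> cover_edge B b v W"
      using \<open>T = insert v (B - {b})\<close> by (auto simp: cover_edge_def)
    ultimately have "T \<in> complex_of n E"
      using True unfolding complex_of_def by blast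
    then show ?thesis
      by (simp add: add_set_def)
  qed
  moreover have "card (insert v B) = j + 2"
    using assms(1,2) \<open>v \<notin> B\<close> by simp
  ultimately show ?thesis
    using assms(1) unfolding is_shell_def by blast
qed

lemma card_good_apexes_le_card_shells:
  assumes "\<And>e. E e \<Longrightarrow> e \<subseteq> {1..n}" "B \<subseteq> {1..n}" "card B = j + 1"
  shows "card {v\<in>apex_cands n B. good_apex n B m E v}
       \<le> card {S. is_shell (add_set (complex_of n E) B) j S \<and> B \<subseteq> S}"
proof -
  have "finite B"
    using assms(2) by (rule finite_subset) simp
  have "inj_on (\<lambda>v. insert v B) {v\<in>apex_cands n B. good_apex n B m E v}"
    unfolding inj_on_def apex_cands_def by (metis (no_types, lifting) DiffD2 insertE insertI1 mem_Collect_eq)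
  then have "card {v\<in>apex_cands n B. good_apex n B m E v}
      = card ((\<lambda>v. insert v B) ` {v\<in>apex_cands n B. good_apex n B m E v})"
    by (rule card_image[symmetric])
  also have "\<dots> \<le> card {S. is_shell (add_set (complex_of n E) B) j S \<and> B \<subseteq> S}"
  proof (rule card_mono)
    have "{S. is_shell (add_set (complex_of n E) B) j S \<and> B \<subseteq> S} \<subseteq> Pow {1..n}"
      using shell_subset[OF assms(1,2)] by blast
    then show "finite {S. is_shell (add_set (complex_of n E) B) j S \<and> B \<subseteq> S}"
      by (rule finite_subset) simp
    show "(\<lambda>v. insert v B) ` {v\<in>apex_cands n B. good_apex n B m E v}
        \<subseteq> {S. is_shell (add_set (complex_of n E) B) j S \<and> B \<subseteq> S}"
      using is_shell_insert_good_apex[OF \<open>finite B\<close> assms(3)] by blast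
  qed
  finally show ?thesis .
qed

lemma complex_of_in_shell_rich:
  assumes "\<And>e. E e \<Longrightarrow> e \<subseteq> {1..n}"
    and "\<forall>B. B \<subseteq> {1..n} \<and> card B = j + 1 \<longrightarrow> \<zeta> * real n \<le> card {v\<in>apex_cands n B. good_apex n B m E v}"
  shows "complex_of n E \<in> shell_rich n j \<zeta>"
  unfolding shell_rich_def
proof (intro CollectI allI impI, elim conjE)
  fix B assume B: "B \<subseteq> {1..n}" "card B = j + 1"
  then have "\<zeta> * real n \<le> card {v\<in>apex_cands n B. good_apex n B m E v}"
    using assms(2) by blast
  also have "\<dots> \<le> card {S. is_shell (add_set (complex_of n E) B) j S \<and> B \<subseteq> S}"
    using card_good_apexes_le_card_shells[OF assms(1) B] by simp
  finally show "\<zeta> * real n \<le> card {S. is_shell (add_set (complex_of n E) B) j S \<and> B \<subseteq> S}" .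
qed

context
  fixes n d j m :: nat and B :: "nat set" and q :: "nat \<Rightarrow> real"
  assumes B: "B \<subseteq> {1..n}" "card B = j + 1"
    and jm: "1 \<le> j + m" "j + m \<le> d"
    and q_nonneg: "0 \<le> q (j + m)"
begin

lemma prob_cover_edge_ex:
  assumes "b \<in> B" "v \<in> apex_cands n B"
  shows "measure_pmf.prob (random_edges n d q) {E. \<exists>W\<in>fillings n B m. E (cover_edge B b v W)}
       = 1 - (1 - min (q (j + m)) 1) ^ card (fillings n B m)"
proof -
  let ?S = "cover_edge B b v ` fillings n B m"
  have S: "?S \<subseteq> edge_cands n d"
    using cover_edge_in_edge_cands[OF B(1) assms] B(2) jm by auto
  have card_S: "card e - 1 = j + m" if "e \<in> ?S" for e
    using that card_cover_edge[OF finite_subset[OF B(1)] assms] B(2) by auto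
  have "inj_on (cover_edge B b v) (fillings n B m)"
    using cover_edge_eqD[of B b v _ b v, OF _ assms(1,1,2,2)] by (auto simp: inj_on_def fillings_def)
  then have "(\<Prod>e\<in>?S. 1 - min (q (card e - 1)) 1) = (1 - min (q (j + m)) 1) ^ card (fillings n B m)"
    using card_S by (simp add: card_image)
  moreover have "measure_pmf.prob (random_edges n d q) {E. \<exists>e\<in>?S. E e}
      = 1 - (\<Prod>e\<in>?S. 1 - min (q (card e - 1)) 1)"
    unfolding random_edges_def using S q_nonneg card_S by (intro prob_Pi_pmf_bernoulli_ex) auto
  moreover have "{E. \<exists>e\<in>?S. E e} = {E. \<exists>W\<in>fillings n B m. E (cover_edge B b v W)}"
    by auto
  ultimately show ?thesis
    by simp
qed

lemma prob_good_apex: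
  assumes "v \<in> apex_cands n B"
  shows "measure_pmf.prob (random_edges n d q) {E. good_apex n B m E v}
       = (1 - (1 - min (q (j + m)) 1) ^ card (fillings n B m)) ^ (j + 1)"
proof -
  have "disjoint_family_on (\<lambda>b. cover_edge B b v ` fillings n B m) B"
    using cover_edge_eqD[of B _ v _ _ v, OF _ _ _ assms assms]
    by (fastforce simp: disjoint_family_on_def fillings_def)
  then have "measure_pmf.prob (random_edges n d q) {E. good_apex n B m E v}
      = (\<Prod>b\<in>B. measure_pmf.prob (random_edges n d q) {E. \<exists>W\<in>fillings n B m. E (cover_edge B b v W)})"
    unfolding random_edges_def good_apex_def
    using cover_edge_in_edge_cands[OF B(1) _ assms] B jm
    by (intro prob_Pi_pmf_disjoint_blocks[where F="\<lambda>b. cover_edge B b v ` fillings n B m"])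
      (auto intro: finite_subset)
  then show ?thesis
    using prob_cover_edge_ex assms B(2) by simp
qed

lemma map_good_apexes:
  "map_pmf (\<lambda>E v. v \<in> apex_cands n B \<and> good_apex n B m E v) (random_edges n d q)
   = Pi_pmf (apex_cands n B) False
       (\<lambda>_. bernoulli_pmf ((1 - (1 - min (q (j + m)) 1) ^ card (fillings n B m)) ^ (j + 1)))"
proof -
  define F where "F v = {cover_edge B b v W |b W. b \<in> B \<and> W \<in> fillings n B m}" for v
  have "disjoint_family_on F (apex_cands n B)"
    using cover_edge_eqD[of B] by (fastforce simp: disjoint_family_on_def F_def fillings_def)
  moreover have "F v \<subseteq> edge_cands n d" if "v \<in> apex_cands n B" for v
    using cover_edge_in_edge_cands[OF B(1) _ that] B(2) jm by (auto simp: F_def)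
  moreover have "good_apex n B m f v = good_apex n B m g v" if "\<forall>e\<in>F v. f e = g e" for v f g
    using that unfolding good_apex_def F_def by blast
  ultimately have "map_pmf (\<lambda>E v. v \<in> apex_cands n B \<and> good_apex n B m E v) (random_edges n d q)
      = Pi_pmf (apex_cands n B) False
          (\<lambda>v. bernoulli_pmf (measure_pmf.prob (random_edges n d q) {E. good_apex n B m E v}))"
    unfolding random_edges_def by (intro map_Pi_pmf_disjoint_blocks[where F=F]) auto
  then show ?thesis
    by (simp add: prob_good_apex cong: Pi_pmf_cong)
qed

lemma prob_few_good_apexes_Hoeffding:
  assumes "0 < c" "c \<le> (1 - (1 - min (q (j + m)) 1) ^ card (fillings n B m)) ^ (j + 1)"
    and "0 < n" "real n / 4 \<le> card (apex_cands n B)"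
  shows "measure_pmf.prob (random_edges n d q)
           {E. real (card {v\<in>apex_cands n B. good_apex n B m E v}) < c / 8 * real n}
         \<le> exp (- (c\<^sup>2 * real n / 8))"
proof -
  define r where "r = (1 - (1 - min (q (j + m)) 1) ^ card (fillings n B m)) ^ (j + 1)"
  define X where "X = apex_cands n B"
  define N where "N = real (card X)"
  have "0 \<le> (1 - min (q (j + m)) 1) ^ k" "(1 - min (q (j + m)) 1) ^ k \<le> 1" for k
    using q_nonneg by (auto intro: power_le_one)
  then have r: "r \<in> {0..1}"
    unfolding r_def atLeastAtMost_iff by (intro conjI zero_le_power power_le_one) auto
  have "N > 0"
    using assms(3,4) by (simp add: X_def N_def)
  then have X: "X \<noteq> {}"
    by (auto simp: N_def)
  have "measure_pmf.prob (random_edges n d q) {E. real (card {v\<in>X. good_apex n B m E v}) < c / 8 * real n}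
      = measure_pmf.prob (map_pmf (\<lambda>E v. v \<in> X \<and> good_apex n B m E v) (random_edges n d q))
           {f. real (card {v\<in>X. f v}) < c / 8 * real n}"
    by simp
  also have "\<dots> = measure_pmf.prob (Pi_pmf X False (\<lambda>_. bernoulli_pmf r))
           {f. real (card {v\<in>X. f v}) < c / 8 * real n}"
    unfolding X_def r_def map_good_apexes ..
  also have "\<dots> \<le> measure_pmf.prob (Pi_pmf X False (\<lambda>_. bernoulli_pmf r))
           {f. real (card {v\<in>X. f v}) \<le> r * N - c * N / 2}"
  proof (rule measure_pmf.finite_measure_mono)
    have "c * N \<le> r * N"
      using assms(2) \<open>N > 0\<close> unfolding r_def by simp
    moreover have "c * real n \<le> c * (4 * N)"
      using assms(1,4) by (simp add: N_def X_def)
    ultimately have "c / 8 * real n \<le> r * N - c * N / 2"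
      by linarith
    then show "{f. real (card {v\<in>X. f v}) < c / 8 * real n} \<subseteq>
        {f. real (card {v\<in>X. f v}) \<le> r * N - c * N / 2}"
      by (intro Collect_mono impI) linarith
  qed simp
  also have "\<dots> \<le> exp (-2 * (c * N / 2)\<^sup>2 / N)"
    using Pi_pmf_bernoulli_count_lower_tail[of X "\<lambda>_. r" "c * N / 2"] X r assms(1)
    by (simp add: N_def X_def mult.commute)
  also have "\<dots> = exp (- (c\<^sup>2 * N / 2))"
    using \<open>N > 0\<close> by (simp add: power2_eq_square)
  also have "\<dots> \<le> exp (- (c\<^sup>2 * real n / 8))"
  proof -
    have "c\<^sup>2 * real n \<le> c\<^sup>2 * (4 * N)"
      using assms(4) by (intro mult_left_mono) (auto simp: N_def X_def)
    then show ?thesis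
      by (simp add: algebra_simps)
  qed
  finally show ?thesis
    unfolding X_def .
qed

end

lemma prob_few_good_apexes_le_exp:
  fixes q :: "nat \<Rightarrow> real"
  assumes B: "B \<subseteq> {1..n}" "card B = j + 1"
    and m: "1 \<le> m" "j + m \<le> d" and n: "4 * j + 6 \<le> n" "4 * m \<le> n"
    and \<kappa>: "0 < \<kappa>" "\<kappa> \<le> min (q (j + m)) 1 * (real n / (4 * real m)) ^ m"
  defines "c \<equiv> (1 - exp (- \<kappa>)) ^ (j + 1)"
  shows "measure_pmf.prob (random_edges n d q)
           {E. real (card {v\<in>apex_cands n B. good_apex n B m E v}) < c / 8 * real n}
         \<le> exp (- (c\<^sup>2 * real n / 8))"
proof -
  have "finite B"
    using B(1) by (rule finite_subset) simp
  have "0 < min (q (j + m)) 1 * (real n / (4 * real m)) ^ m"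
    using \<kappa> by linarith
  moreover have "0 < (real n / (4 * real m)) ^ m"
    using m(1) n(2) by simp
  ultimately have q: "0 < min (q (j + m)) 1"
    by (rule zero_less_mult_pos2)
  have "(real n / (4 * real m)) ^ m \<le> card (fillings n B m)"
    using B(2) n by (intro card_fillings_ge[OF \<open>finite B\<close> _ m(1)]) auto
  then have "\<kappa> \<le> min (q (j + m)) 1 * card (fillings n B m)"
    using \<kappa>(2) q by (meson mult_left_mono less_imp_le order_trans)
  then have "(1 - min (q (j + m)) 1) ^ card (fillings n B m) \<le> exp (- \<kappa>)"
    using q by (intro one_minus_power_le_exp) auto
  then have "c \<le> (1 - (1 - min (q (j + m)) 1) ^ card (fillings n B m)) ^ (j + 1)"
    unfolding c_def using \<kappa>(1) by (intro power_mono) auto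
  moreover have "0 < c"
    unfolding c_def using \<kappa>(1) by simp
  moreover have "real n / 4 \<le> card (apex_cands n B)"
    using \<open>finite B\<close> B(2) n(1) by (intro card_apex_cands_ge) auto
  ultimately show ?thesis
    using B m q n by (intro prob_few_good_apexes_Hoeffding) auto
qed

lemma set_pmf_random_edges_subset:
  assumes "E \<in> set_pmf (random_edges n d q)" "E e"
  shows "e \<subseteq> {1..n}"
  using assms set_Pi_pmf_subset[OF finite_edge_cands, of n d False]
  by (auto simp: random_edges_def edge_cands_def)

lemma prob_many_shells_ge:
  fixes q :: "nat \<Rightarrow> real"
  assumes m: "1 \<le> m" "j + m \<le> d" and n: "4 * j + 6 \<le> n" "4 * m \<le> n"
    and \<kappa>: "0 < \<kappa>" "\<kappa> \<le> min (q (j + m)) 1 * (real n / (4 * real m)) ^ m"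
  defines "c \<equiv> (1 - exp (- \<kappa>)) ^ (j + 1)"
  shows "1 - real n ^ (j + 1) * exp (- (c\<^sup>2 * real n / 8))
         \<le> measure_pmf.prob (random_complex n d q) (shell_rich n j (c / 8))"
proof -
  define Bs where "Bs = {B. B \<subseteq> {1..n} \<and> card B = j + 1}"
  define few where
    "few B = {E. real (card {v\<in>apex_cands n B. good_apex n B m E v}) < c / 8 * real n}" for B
  let ?RE = "random_edges n d q"
  have "finite Bs"
    unfolding Bs_def by (rule finite_subset[of _ "Pow {1..n}"]) auto
  have "card Bs = n choose (j + 1)"
    unfolding Bs_def using n_subsets[of "{1..n}" "j + 1"] by simp
  also have "\<dots> \<le> n ^ (j + 1)"
    using n(1) by (intro binomial_le_pow) simp
  finally have "real (card Bs) \<le> real n ^ (j + 1)"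
    by (metis of_nat_le_iff of_nat_power)
  then have "1 - real n ^ (j + 1) * exp (- (c\<^sup>2 * real n / 8))
      \<le> 1 - (\<Sum>B\<in>Bs. exp (- (c\<^sup>2 * real n / 8)))"
    by (simp add: mult_right_mono)
  also have "\<dots> \<le> 1 - (\<Sum>B\<in>Bs. measure_pmf.prob ?RE (few B))"
  proof (intro diff_left_mono sum_mono)
    fix B assume "B \<in> Bs"
    then show "measure_pmf.prob ?RE (few B) \<le> exp (- (c\<^sup>2 * real n / 8))"
      unfolding few_def c_def using m n \<kappa> by (intro prob_few_good_apexes_le_exp) (auto simp: Bs_def)
  qed
  also have "\<dots> \<le> measure_pmf.prob ?RE (- (\<Union>B\<in>Bs. few B))"
    using \<open>finite Bs\<close> by (rule prob_compl_UNION_ge)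
  also have "\<dots> = measure_pmf.prob ?RE (- (\<Union>B\<in>Bs. few B) \<inter> set_pmf ?RE)"
    by (simp add: measure_Int_set_pmf)
  also have "\<dots> \<le> measure_pmf.prob ?RE (complex_of n -` shell_rich n j (c / 8))"
  proof (rule measure_pmf.finite_measure_mono)
    show "- (\<Union>B\<in>Bs. few B) \<inter> set_pmf ?RE \<subseteq> complex_of n -` shell_rich n j (c / 8)"
    proof
      fix E assume E: "E \<in> - (\<Union>B\<in>Bs. few B) \<inter> set_pmf ?RE"
      then have "\<And>e. E e \<Longrightarrow> e \<subseteq> {1..n}"
        using set_pmf_random_edges_subset by blast
      moreover have "\<forall>B. B \<subseteq> {1..n} \<and> card B = j + 1 \<longrightarrow>
          c / 8 * real n \<le> card {v\<in>apex_cands n B. good_apex n B m E v}"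
        using E by (auto simp: Bs_def few_def)
      ultimately show "E \<in> complex_of n -` shell_rich n j (c / 8)"
        by (simp add: complex_of_in_shell_rich)
    qed
  qed simp
  also have "\<dots> = measure_pmf.prob (random_complex n d q) (shell_rich n j (c / 8))"
    by (simp add: random_complex_def)
  finally show ?thesis .
qed

lemma admissible_repr_edge_prob_ge:
  assumes "admissible_repr d j p \<alpha> \<beta> \<gamma>"
  obtains m a where "1 \<le> m" "j + m \<le> d" "0 < a"
    "\<forall>\<^sub>F n in sequentially. a * ln (real n) / real n ^ m \<le> p (j + m) n"
proof -
  obtain k where k: "k \<in> {j + 1..d}" "0 < \<alpha> k"
    using assms unfolding admissible_repr_def by blast
  then have "k \<in> {1..d}"
    by auto
  then have p: "\<And>n. p k n = (\<alpha> k * ln (real n) + \<beta> k n) / real n powr (real k - real j + \<gamma> k)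
                              * fact (k - j)"
    and "\<alpha> k = 0 \<or> \<gamma> k = 0" and "\<gamma> k = 0 \<longrightarrow> (\<lambda>n. \<bar>\<beta> k n\<bar>) \<in> o(\<lambda>n. ln (real n))"
    using assms unfolding admissible_repr_def by blast+
  then have "\<gamma> k = 0" and small: "(\<lambda>n. \<bar>\<beta> k n\<bar>) \<in> o(\<lambda>n. ln (real n))"
    using k(2) by auto
  define m where "m = k - j"
  have "\<forall>\<^sub>F n in sequentially. \<bar>\<beta> k n\<bar> \<le> \<alpha> k / 2 * \<bar>ln (real n)\<bar>"
    using landau_o.smallD[OF small, of "\<alpha> k / 2"] k(2) by simp
  moreover have "\<forall>\<^sub>F n in sequentially. 1 \<le> n"
    by (rule eventually_ge_at_top)
  ultimately have p_ge: "\<forall>\<^sub>F n in sequentially. \<alpha> k / 2 * ln (real n) / real n ^ m \<le> p (j + m) n"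
  proof eventually_elim
    case (elim n)
    have "0 \<le> ln (real n)" "0 < real n ^ m"
      using elim(2) by auto
    have "real k - real j + \<gamma> k = real m"
      using k(1) \<open>\<gamma> k = 0\<close> by (simp add: m_def)
    then have p_n: "p (j + m) n = (\<alpha> k * ln (real n) + \<beta> k n) / real n ^ m * fact m"
      using p[of n] k(1) elim(2) by (simp add: m_def powr_realpow)
    have "\<alpha> k / 2 * ln (real n) / real n ^ m \<le> (\<alpha> k * ln (real n) + \<beta> k n) / real n ^ m"
      using \<open>0 \<le> ln (real n)\<close> \<open>0 < real n ^ m\<close> elim(1)
      by (intro divide_right_mono) (auto simp: abs_le_iff)
    also have "\<dots> \<le> (\<alpha> k * ln (real n) + \<beta> k n) / real n ^ m * fact m"
    proof -
      have "0 \<le> (\<alpha> k * ln (real n) + \<beta> k n) / real n ^ m"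
        using \<open>0 \<le> ln (real n)\<close> \<open>0 < real n ^ m\<close> elim(1) k(2) by (auto simp: abs_le_iff)
      from mult_left_mono[OF fact_ge_1 this] show ?thesis
        by simp
    qed
    finally show ?case
      unfolding p_n .
  qed
  have "1 \<le> m" "j + m \<le> d" "0 < \<alpha> k / 2"
    using k by (auto simp: m_def)
  then show thesis
    using p_ge by (rule that)
qed

lemma eventually_edge_weight_ge:
  assumes "0 < \<epsilon>" "0 < a" "1 \<le> m"
    and w: "\<forall>\<^sub>F n in sequentially. a * ln (real n) / real n ^ m \<le> w n"
    and \<tau>: "\<And>n. \<epsilon> / ln (real n) \<le> \<tau> n"
  shows "\<forall>\<^sub>F n in sequentially.
           min (\<epsilon> * a / (4 * real m) ^ m) 1 \<le> min (\<tau> n * w n) 1 * (real n / (4 * real m)) ^ m"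
  using w eventually_ge_at_top[of "max 2 (4 * m)"]
proof eventually_elim
  case (elim n)
  define y where "y = (real n / (4 * real m)) ^ m"
  have "0 < ln (real n)" "0 < real n ^ m"
    using elim(2) by auto
  then have "0 \<le> w n"
    using elim(1) assms(2) by (meson divide_nonneg_pos less_imp_le mult_nonneg_nonneg order_trans)
  have "\<epsilon> * a / real n ^ m = \<epsilon> / ln (real n) * (a * ln (real n) / real n ^ m)"
    using \<open>0 < ln (real n)\<close> by simp
  also have "\<dots> \<le> \<tau> n * w n"
  proof (rule mult_mono)
    have "0 \<le> \<epsilon> / ln (real n)"
      using assms(1) \<open>0 < ln (real n)\<close> by simp
    then show "0 \<le> \<tau> n"
      using \<tau>[of n] by linarith
  qed (use \<tau>[of n] elim(1) assms(2) \<open>0 < ln (real n)\<close> \<open>0 < real n ^ m\<close> in auto)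
  finally have "\<epsilon> * a / (4 * real m) ^ m \<le> \<tau> n * w n * y"
    using \<open>0 < real n ^ m\<close> assms(3) by (simp add: y_def field_simps)
  moreover have "1 \<le> y"
    using elim(2) assms(3) unfolding y_def by (intro one_le_power) (simp add: field_simps)
  ultimately show ?case
    unfolding y_def[symmetric] by (auto simp: min_mult_distrib_right min_def)
qed

lemma shell_rich_whp:
  fixes p :: "nat \<Rightarrow> nat \<Rightarrow> real"
  assumes m: "1 \<le> m" "j + m \<le> d" and "0 < a"
    and p: "\<forall>\<^sub>F n in sequentially. a * ln (real n) / real n ^ m \<le> p (j + m) n"
  shows "\<forall>\<epsilon>>0. \<exists>\<zeta>>0. \<forall>\<tau> :: nat \<Rightarrow> real. (\<forall>n. \<epsilon> / ln (real n) \<le> \<tau> n) \<longrightarrow>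
           (\<lambda>n. measure_pmf.prob (random_complex n d (\<lambda>k. \<tau> n * p k n)) (shell_rich n j \<zeta>))
           \<longlonglongrightarrow> 1"
proof (intro allI impI)
  fix \<epsilon> :: real assume "0 < \<epsilon>"
  define \<kappa> where "\<kappa> = min (\<epsilon> * a / (4 * real m) ^ m) 1"
  define c where "c = (1 - exp (- \<kappa>)) ^ (j + 1)"
  have "0 < \<kappa>"
    using \<open>0 < \<epsilon>\<close> \<open>0 < a\<close> m(1) by (simp add: \<kappa>_def)
  then have "0 < c"
    by (simp add: c_def)
  moreover have "(\<lambda>n. measure_pmf.prob (random_complex n d (\<lambda>k. \<tau> n * p k n)) (shell_rich n j (c / 8)))
      \<longlonglongrightarrow> 1" if "\<forall>n. \<epsilon> / ln (real n) \<le> \<tau> n" for \<tau>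
  proof -
    have "\<forall>\<^sub>F n in sequentially. \<kappa> \<le> min (\<tau> n * p (j + m) n) 1 * (real n / (4 * real m)) ^ m"
      unfolding \<kappa>_def using that \<open>0 < \<epsilon>\<close> \<open>0 < a\<close> m(1) p by (intro eventually_edge_weight_ge) auto
    then have lower: "\<forall>\<^sub>F n in sequentially. 1 - real n ^ (j + 1) * exp (- (c\<^sup>2 * real n / 8))
        \<le> measure_pmf.prob (random_complex n d (\<lambda>k. \<tau> n * p k n)) (shell_rich n j (c / 8))"
      using eventually_ge_at_top[of "4 * j + 6 + 4 * m"]
    proof eventually_elim
      case (elim n)
      then show ?case
        unfolding c_def using m \<open>0 < \<kappa>\<close> by (intro prob_many_shells_ge) auto
    qed
    have lim: "(\<lambda>n. 1 - real n ^ (j + 1) * exp (- (c\<^sup>2 * real n / 8))) \<longlonglongrightarrow> 1"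
      using \<open>0 < c\<close> by real_asymp
    show ?thesis
      by (rule tendsto_sandwich[OF lower _ lim tendsto_const])
        (intro always_eventually allI measure_pmf.prob_le_1)
  qed
  ultimately show "\<exists>\<zeta>>0. \<forall>\<tau> :: nat \<Rightarrow> real. (\<forall>n. \<epsilon> / ln (real n) \<le> \<tau> n) \<longrightarrow>
      (\<lambda>n. measure_pmf.prob (random_complex n d (\<lambda>k. \<tau> n * p k n)) (shell_rich n j \<zeta>)) \<longlonglongrightarrow> 1"
    by (intro exI[of _ "c / 8"]) auto
qed

theorem lemma5p3:
  fixes d j :: nat and p :: "nat \<Rightarrow> nat \<Rightarrow> real"
  assumes "d \<ge> 2" and "1 \<le> j" and "j \<le> d - 1" and "j_critical d j p"
  shows "\<forall>\<epsilon>>0. \<exists>\<zeta>>0. \<forall>\<tau> :: nat \<Rightarrow> real. (\<forall>n. \<tau> n \<ge> \<epsilon> / ln (real n)) \<longrightarrow>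
           (\<lambda>n. measure_pmf.prob (random_complex n d (\<lambda>k. \<tau> n * p k n))
              {G. \<forall>B. B \<subseteq> {1..n} \<and> card B = j + 1 \<longrightarrow>
                     real (card {S. is_shell (add_set G B) j S \<and> B \<subseteq> S}) \<ge> \<zeta> * real n})
           \<longlonglongrightarrow> 1"
proof -
  obtain \<alpha> \<beta> \<gamma> where "admissible_repr d j p \<alpha> \<beta> \<gamma>"
    using assms(4) unfolding j_critical_def by blast
  then obtain m a where "1 \<le> m" "j + m \<le> d" "0 < a"
    and "\<forall>\<^sub>F n in sequentially. a * ln (real n) / real n ^ m \<le> p (j + m) n"
    by (rule admissible_repr_edge_prob_ge)
  then show ?thesis
    unfolding shell_rich_def[symmetric] by (rule shell_rich_whp)
qed

end
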